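(* Work with vorticities on $\mathbb{R}^2$ of the form $\omega(r,\theta)=h(\theta)$ in polar coordinates, where $h$ is $\frac{\pi}{2}$-periodic (4-fold rotationally symmetric), so that $h$ may be identified with a function on $[-\frac{\pi}{4},\frac{\pi}{4})$ with endpoints identified. For such $\omega$ the velocity is $u = 2rH(\theta)\,e_\theta$, where $$H(\theta)=\frac{\pi}{8}\int_{-\pi/4}^{\pi/4}\left|\sin(2(\theta-\theta'))\right| h(\theta')\,d\theta',$$ (equivalently $4H+H''=h$), and the 2D Euler evolution of such data is $\omega(t,r,\theta)=h(t,\theta)$ with $h(t,\cdot)$ transported by the angular velocity $2H(t,\cdot)$. A solution $\omega(t)$ is called rotating if there is a nonzero constant $c$ with $\omega(t,r,\theta)=\omega_0(r,\theta-ct)$ for all $t$. Let $\mathcal{I}$ be a disjoint union of intervals contained in $[-\frac{\pi}{8},\frac{\pi}{8}]$, and assume that $\omega_0={\bf 1}_{\mathcal{I}}(\theta)$ (extended $\frac{\pi}{2}$-periodically in $\theta$) defines a rotating solution. Then $\omega_0={\bf 1}_{[b,a]}$ for some $-\frac{\pi}{8}\le b\le a\le\frac{\pi}{8}$.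
   Context: Polar coordinates $(r,\theta)$ on $\mathbb{R}^2$; $e_\theta$ is the unit angular vector. The 2D incompressible Euler equation is $\partial_t\omega+u\cdot\nabla\omega=0$, $u=\nabla^\perp\Delta^{-1}\omega$. *)

theory Defs
  imports "HOL-Analysis.Analysis"
begin

definition Hfun :: "(real \<Rightarrow> real) \<Rightarrow> real \<Rightarrow> real" where
  "Hfun h \<theta> = pi / 8 * integral {-pi/4..pi/4} (\<lambda>\<theta>'. \<bar>sin (2 * (\<theta> - \<theta>'))\<bar> * h \<theta>')"

definition per_ind :: "real set \<Rightarrow> real \<Rightarrow> real" where
  "per_ind I \<theta> = (if \<exists>k::int. \<theta> - of_int k * (pi/2) \<in> I then 1 else 0)"

definition test_fun :: "(real \<times> real \<Rightarrow> real) \<Rightarrow> (real \<times> real \<Rightarrow> real \<times> real \<Rightarrow> real) \<Rightarrow> bool" where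
  "test_fun \<phi> D\<phi> \<longleftrightarrow>
     (\<forall>p. (\<phi> has_derivative D\<phi> p) (at p)) \<and>
     continuous_on UNIV (\<lambda>p. D\<phi> p (1, 0)) \<and>
     continuous_on UNIV (\<lambda>p. D\<phi> p (0, 1)) \<and>
     (\<forall>t \<theta>. \<phi> (t, \<theta> + pi/2) = \<phi> (t, \<theta>)) \<and>
     (\<exists>T. \<forall>t \<theta>. T \<le> \<bar>t\<bar> \<longrightarrow> \<phi> (t, \<theta>) = 0)"

text \<open>Weak formulation of  d_t h + 2 H(t) d_theta h = 0  (2D Euler for r-independent
  vorticity), i.e. for all test functions
  int int h (d_t phi + 2 H d_theta phi + 2 H' phi) dtheta dt = 0.\<close>
definition euler_weak_sol :: "(real \<Rightarrow> real \<Rightarrow> real) \<Rightarrow> bool" where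
  "euler_weak_sol h \<longleftrightarrow>
     (\<forall>\<phi> D\<phi>. test_fun \<phi> D\<phi> \<longrightarrow>
        integral UNIV (\<lambda>t. integral {-pi/4..pi/4} (\<lambda>\<theta>.
          h t \<theta> * (D\<phi> (t, \<theta>) (1, 0) + 2 * Hfun (h t) \<theta> * D\<phi> (t, \<theta>) (0, 1)
                    + 2 * deriv (Hfun (h t)) \<theta> * \<phi> (t, \<theta>)))) = 0)"

definition rotating :: "(real \<Rightarrow> real) \<Rightarrow> bool" where
  "rotating h0 \<longleftrightarrow> (\<exists>c. c \<noteq> 0 \<and> euler_weak_sol (\<lambda>t \<theta>. h0 (\<theta> - c * t)))"

end

theory Submission
  imports Defs
begin

text \<open>
  Let \<open>\<mu>(e)\<close> be the jump of the indicator of \<open>I\<close> at \<open>e\<close>. Since \<open>sin x \<bar>sin x\<bar>\<close> is an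
  antiderivative of \<open>\<bar>sin 2x\<bar>\<close> on \<open>(-pi/2, pi/2)\<close>, near \<open>[-pi/8, pi/8]\<close> the profile is
  \<open>H = pi/8 \<Sum>\<^sub>e \<mu>(e) sin (\<theta> - e) \<bar>sin (\<theta> - e)\<bar>\<close>. Testing the weak formulation against
  \<open>\<chi>(t) \<psi>(\<theta> - c t)\<close> and integrating by parts in \<open>\<theta>\<close> gives \<open>\<Sum>\<^sub>e \<mu>(e) (2 H(e) - c) \<psi>(e) = 0\<close>;
  choosing \<open>\<psi>\<close> to separate the jumps, a rotating solution of speed \<open>c \<noteq> 0\<close> has \<open>2 H = c\<close> at
  every jump.

  The first two jumps \<open>e\<^sub>1 < e\<^sub>2\<close> are \<open>+1\<close> and \<open>-1\<close>. If there were a further jump \<open>e\<^sub>3\<close>, let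
  \<open>e\<^sub>N\<close> be the last one. On the jumps, \<open>H\<close> is given by two sinusoids \<open>A cos 2\<theta> + B sin 2\<theta>\<close> of
  equal amplitude: one takes the common value at \<open>e\<^sub>N - pi/2\<close> and \<open>e\<^sub>1\<close>, at distance at least
  \<open>pi/4\<close>, the other at \<open>e\<^sub>2\<close> and \<open>e\<^sub>3\<close>, at distance less than \<open>pi/4\<close>. This is impossible for a
  nonzero value, so \<open>I\<close> is \<open>[e\<^sub>1, e\<^sub>2]\<close> up to finitely many points.
\<close>

lemma has_real_derivative_times_abs:
  "((\<lambda>y::real. y * \<bar>y\<bar>) has_real_derivative 2 * \<bar>x\<bar>) (at x)"
proof (cases x "0::real" rule: linorder_cases)
  case less
  have "((\<lambda>y::real. - (y * y)) has_real_derivative 2 * \<bar>x\<bar>) (at x)"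
    using less by (auto intro!: derivative_eq_intros)
  then show ?thesis
    by (rule has_field_derivative_transform_within_open[where S="{..<0}"]) (use less in auto)
next
  case equal
  have "((\<lambda>y::real. \<bar>y\<bar>) \<longlongrightarrow> 2 * \<bar>0\<bar>) (at 0)"
    by (intro tendsto_eq_intros) auto
  then have "((\<lambda>y::real. (y * \<bar>y\<bar> - 0 * \<bar>0\<bar>) / (y - 0)) \<longlongrightarrow> 2 * \<bar>0\<bar>) (at 0)"
    by (rule Lim_transform_eventually) (auto simp: eventually_at_filter)
  then show ?thesis using equal by (simp add: has_field_derivative_iff)
next
  case greater
  have "((\<lambda>y::real. y * y) has_real_derivative 2 * \<bar>x\<bar>) (at x)"
    using greater by (auto intro!: derivative_eq_intros)
  then show ?thesis
    by (rule has_field_derivative_transform_within_open[where S="{0<..}"]) (use greater in auto)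
qed

definition sin_abs_sin :: "real \<Rightarrow> real" where
  "sin_abs_sin x = sin x * \<bar>sin x\<bar>"

lemma sin_abs_sin_has_derivative:
  assumes "\<bar>x\<bar> < pi/2"
  shows "(sin_abs_sin has_real_derivative \<bar>sin (2 * x)\<bar>) (at x)"
proof -
  have "((\<lambda>x. sin x * \<bar>sin x\<bar>) has_real_derivative 2 * \<bar>sin x\<bar> * cos x) (at x)"
    by (rule DERIV_chain2[OF has_real_derivative_times_abs]) (auto intro!: derivative_eq_intros)
  moreover have "cos x > 0"
    using assms by (intro cos_gt_zero_pi) auto
  then have "2 * \<bar>sin x\<bar> * cos x = \<bar>sin (2 * x)\<bar>"
    by (simp add: sin_double abs_mult)
  ultimately show ?thesis
    unfolding sin_abs_sin_def by simp
qed

lemma sin_abs_sin_eq_cos: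
  assumes "\<bar>x\<bar> \<le> pi/2"
  shows "sin_abs_sin x = (cos (2 * x) - 1) / 2 + (if 0 < x then 1 - cos (2 * x) else 0)"
proof -
  have sq: "sin x * sin x = (1 - cos (2 * x)) / 2"
    by (simp add: cos_double_sin power2_eq_square)
  show ?thesis
  proof (cases "0 < x")
    case True
    then have "sin x \<ge> 0" using assms by (intro sin_ge_zero) auto
    then show ?thesis using True sq by (simp add: sin_abs_sin_def field_simps)
  next
    case False
    then have "sin (- x) \<ge> 0" using assms by (intro sin_ge_zero) auto
    then show ?thesis using False sq by (simp add: sin_abs_sin_def field_simps)
  qed
qed

text \<open>\<open>pos_sq y = (max 0 y)\<^sup>2\<close>, a \<open>C\<^sup>1\<close> function vanishing exactly for \<open>y \<le> 0\<close>.\<close>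
definition pos_sq :: "real \<Rightarrow> real" where
  "pos_sq y = (y * y + y * \<bar>y\<bar>) / 2"

lemma pos_sq_has_derivative: "(pos_sq has_real_derivative y + \<bar>y\<bar>) (at y)"
  unfolding pos_sq_def
  by (rule derivative_eq_intros has_real_derivative_times_abs refl | simp)+

lemma pos_sq_pos: "0 < y \<Longrightarrow> 0 < pos_sq y"
  by (simp add: pos_sq_def)

lemma pos_sq_nonneg_eq: "0 \<le> y \<Longrightarrow> pos_sq y = y * y"
  by (simp add: pos_sq_def)

lemma pos_sq_nonpos_eq: "y \<le> 0 \<Longrightarrow> pos_sq y = 0"
  by (simp add: pos_sq_def abs_if)

lemma has_integral_periodic_shift:
  fixes f :: "real \<Rightarrow> real"
  assumes per: "\<And>x. f (x + p) = f x" and "0 < p" "b = a + p"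
    and f: "(f has_integral y) {a..b}"
  shows "((\<lambda>x. f (x + s)) has_integral y) {a..b}"
proof -
  interpret periodic_fun_simple f p
    by unfold_locales (rule per)
  define r where "r = s - of_int \<lfloor>s / p\<rfloor> * p"
  have "of_int \<lfloor>s / p\<rfloor> * p \<le> s" "s < (of_int \<lfloor>s / p\<rfloor> + 1) * p"
    using \<open>0 < p\<close> by (simp_all add: floor_divide_lower floor_divide_upper)
  then have r: "0 \<le> r" "a + r \<le> b"
    unfolding r_def using \<open>b = a + p\<close> by (auto simp: algebra_simps)
  have shift: "f (x + s) = f (x + r)" for x
    using plus_of_int[of "x + r" "\<lfloor>s / p\<rfloor>"] by (simp add: r_def algebra_simps)
  define J where "J = integral {a..a+r} f"
  define K where "K = integral {a+r..b} f"
  have J: "(f has_integral J) {a..a+r}"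
    unfolding J_def
    by (rule integrable_integral, rule integrable_subinterval_real[OF has_integral_integrable[OF f]])
      (use r in auto)
  have K: "(f has_integral K) {a+r..b}"
    unfolding K_def
    by (rule integrable_integral, rule integrable_subinterval_real[OF has_integral_integrable[OF f]])
      (use r in auto)
  have "y = J + K"
    using has_integral_unique[OF f has_integral_combine[OF _ _ J K]] r by simp
  have "((\<lambda>x. f (x + p)) has_integral J) {b - p..(b + r) - p}"
    using J \<open>b = a + p\<close> by (simp add: plus_period add.commute)
  then have J': "(f has_integral J) {b..b+r}"
    using has_integral_shift_real_ivl_iff[of f J b "b + r" p] by simp
  have "(f has_integral K + J) {a+r..b+r}"
    by (rule has_integral_combine[OF _ _ K J']) (use r in auto)
  then have "((\<lambda>x. f (x + r)) has_integral K + J) {(a+r)-r..(b+r)-r}"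
    using has_integral_shift_real_ivl_iff[of f "K+J" "a+r" "b+r" r] by simp
  then show ?thesis
    using \<open>y = J + K\<close> shift by (simp add: add.commute)
qed

lemma deriv_shift:
  fixes f :: "real \<Rightarrow> real"
  shows "deriv (\<lambda>x. f (x + s)) x = deriv f (x + s)"
  unfolding deriv_def using DERIV_shift[of f _ x s] by simp

lemma deriv_periodic:
  fixes f :: "real \<Rightarrow> real"
  assumes "\<And>x. f (x + p) = f x"
  shows "deriv f (x + p) = deriv f x"
  using deriv_shift[of f p x] assms by simp

lemma has_real_derivative_periodic:
  fixes f :: "real \<Rightarrow> real"
  assumes per: "\<And>x. f (x + p) = f x" and f': "\<And>x. (f has_real_derivative f' x) (at x)"
  shows "f' (x + p) = f' x"
  using deriv_periodic[of f p x, OF per] f' DERIV_imp_deriv by metis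

lemma per_ind_periodic: "per_ind A (x + pi/2) = per_ind A x"
proof -
  have shift: "x + pi/2 - of_int (k + 1) * (pi/2) = x - of_int k * (pi/2)" for k :: int
    by (simp add: algebra_simps)
  have "(\<exists>k::int. x + pi/2 - of_int k * (pi/2) \<in> A) \<longleftrightarrow> (\<exists>k::int. x - of_int k * (pi/2) \<in> A)"
  proof
    assume "\<exists>k::int. x + pi/2 - of_int k * (pi/2) \<in> A"
    then obtain k :: int where "x + pi/2 - of_int ((k - 1) + 1) * (pi/2) \<in> A"
      by auto
    then show "\<exists>k::int. x - of_int k * (pi/2) \<in> A"
      unfolding shift by blast
  next
    assume "\<exists>k::int. x - of_int k * (pi/2) \<in> A"
    then show "\<exists>k::int. x + pi/2 - of_int k * (pi/2) \<in> A"
      unfolding shift[symmetric] by blast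
  qed
  then show ?thesis
    unfolding per_ind_def by simp
qed

lemma Hfun_periodic: "Hfun h (x + pi/2) = Hfun h x"
proof -
  have "\<bar>sin (2 * (x + pi/2 - y))\<bar> = \<bar>sin (2 * (x - y))\<bar>" for y
    using sin_periodic_pi[of "2 * (x - y)"] by (simp add: algebra_simps)
  then show ?thesis
    unfolding Hfun_def by simp
qed

lemma sum_comp_card_fibres:
  fixes \<Phi> :: "'b \<Rightarrow> real"
  assumes "finite A" "finite E" "g ` A \<subseteq> E"
  shows "(\<Sum>J\<in>A. \<Phi> (g J)) = (\<Sum>e\<in>E. real (card {J\<in>A. g J = e}) * \<Phi> e)"
proof -
  have "(\<Sum>J\<in>A. \<Phi> (g J)) = (\<Sum>e\<in>E. \<Sum>J\<in>{J\<in>A. g J = e}. \<Phi> (g J))"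
    using sum.group[OF assms, of "\<lambda>J. \<Phi> (g J)"] by simp
  also have "\<dots> = (\<Sum>e\<in>E. real (card {J\<in>A. g J = e}) * \<Phi> e)"
    by (rule sum.cong) auto
  finally show ?thesis .
qed

lemma bounded_interval_Inf_Sup:
  fixes J :: "real set"
  assumes "is_interval J" "J \<noteq> {}" "J \<subseteq> {a..b}"
  shows "a \<le> Inf J" "Inf J \<le> Sup J" "Sup J \<le> b" "J \<subseteq> {Inf J..Sup J}" "{Inf J<..<Sup J} \<subseteq> J"
proof -
  have bdd: "bdd_above J" "bdd_below J"
    using assms(3) by (auto intro: bdd_above_mono bdd_below_mono)
  show "a \<le> Inf J" "Sup J \<le> b"
    using assms(2,3) by (auto intro!: cInf_greatest cSup_least)
  show J: "J \<subseteq> {Inf J..Sup J}"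
    using bdd by (auto intro: cInf_lower cSup_upper)
  then show "Inf J \<le> Sup J"
    using assms(2) by auto
  show "{Inf J<..<Sup J} \<subseteq> J"
  proof
    fix x assume x: "x \<in> {Inf J<..<Sup J}"
    then obtain y z where "y \<in> J" "y < x" "z \<in> J" "x < z"
      using assms(2) bdd by (auto simp: cInf_less_iff less_cSup_iff)
    then show "x \<in> J"
      using assms(1) unfolding is_interval_1 by (meson less_imp_le)
  qed
qed

lemma has_integral_bounded_interval:
  fixes J :: "real set" and f :: "real \<Rightarrow> real"
  assumes "is_interval J" "J \<noteq> {}" "J \<subseteq> {a..b}" and f: "(f has_integral y) {Inf J..Sup J}"
  shows "(f has_integral y) J"
proof -
  note J = bounded_interval_Inf_Sup[OF assms(1-3)]
  have ends: "{Inf J..Sup J} - J \<subseteq> {Inf J, Sup J}"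
  proof
    fix x assume x: "x \<in> {Inf J..Sup J} - J"
    show "x \<in> {Inf J, Sup J}"
    proof (rule ccontr)
      assume "x \<notin> {Inf J, Sup J}"
      with x have "x \<in> {Inf J<..<Sup J}" by auto
      with J(5) x show False by blast
    qed
  qed
  have n1: "negligible {x \<in> {Inf J..Sup J} - J. f x \<noteq> 0}"
    by (rule negligible_subset[OF negligible_finite[of "{Inf J, Sup J}"]]) (use ends in auto)
  have "{x \<in> J - {Inf J..Sup J}. f x \<noteq> 0} = {}"
    using J(4) by auto
  then have n2: "negligible {x \<in> J - {Inf J..Sup J}. f x \<noteq> 0}"
    by (simp only: negligible_empty)
  show ?thesis
    using has_integral_spike_set_eq[OF n1 n2] f by simp
qed

lemma per_ind_AE_eq:
  assumes "finite X" and "\<And>\<theta>. \<theta> \<notin> X \<Longrightarrow> \<theta> \<in> A \<longleftrightarrow> \<theta> \<in> B"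
  shows "AE \<theta> in lborel. per_ind A \<theta> = per_ind B \<theta>"
proof -
  define N where "N = (\<Union>k::int. (\<lambda>x. x + of_int k * (pi/2)) ` X)"
  have "countable N"
    unfolding N_def using assms(1) by (intro countable_UN) (auto intro: countable_finite)
  then have "AE \<theta> in lborel. \<theta> \<notin> N"
    by (intro AE_not_in countable_imp_null_set_lborel)
  then show ?thesis
  proof (rule eventually_mono)
    fix \<theta> assume "\<theta> \<notin> N"
    then have "\<theta> - of_int k * (pi/2) \<notin> X" for k :: int
      unfolding N_def by force
    then show "per_ind A \<theta> = per_ind B \<theta>"
      unfolding per_ind_def using assms(2) by simp
  qed
qed

lemma finite_avoid_between:
  fixes X :: "real set"
  assumes "finite X" "a < b"
  obtains \<theta> where "a < \<theta>" "\<theta> < b" "\<theta> \<notin> X"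
proof -
  have "\<not> {a<..<b} \<subseteq> X"
    using assms infinite_Ioo finite_subset by blast
  then obtain \<theta> where "\<theta> \<in> {a<..<b}" "\<theta> \<notin> X"
    by blast
  then show ?thesis
    by (intro that) auto
qed

section \<open>Sinusoids\<close>

lemma sum_sin_abs_sin:
  fixes m :: "real \<Rightarrow> real"
  assumes "finite E" and "\<And>e. e \<in> E \<Longrightarrow> \<bar>\<theta> - e\<bar> \<le> pi/2"
  shows "(\<Sum>e\<in>E. m e * sin_abs_sin (\<theta> - e)) =
    ((\<Sum>e\<in>E. m e * cos (2 * (\<theta> - e))) - sum m E) / 2
    + (\<Sum>e\<in>{e\<in>E. e < \<theta>}. m e * (1 - cos (2 * (\<theta> - e))))"
proof -
  have "(\<Sum>e\<in>E. m e * sin_abs_sin (\<theta> - e)) = (\<Sum>e\<in>E. (m e * cos (2 * (\<theta> - e)) - m e) / 2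
      + (if e < \<theta> then m e * (1 - cos (2 * (\<theta> - e))) else 0))"
    using assms(2) by (intro sum.cong) (auto simp: sin_abs_sin_eq_cos field_simps)
  also have "\<dots> = (\<Sum>e\<in>E. (m e * cos (2 * (\<theta> - e)) - m e) / 2)
      + (\<Sum>e\<in>{e\<in>E. e < \<theta>}. m e * (1 - cos (2 * (\<theta> - e))))"
    by (simp only: sum.distrib sum.inter_filter[OF assms(1)])
  also have "(\<Sum>e\<in>E. (m e * cos (2 * (\<theta> - e)) - m e) / 2)
      = ((\<Sum>e\<in>E. m e * cos (2 * (\<theta> - e))) - sum m E) / 2"
    by (simp only: sum_divide_distrib[symmetric] sum_subtractf)
  finally show ?thesis .
qed

lemma cos_double_diff:
  fixes x y :: real
  shows "cos (2 * (x - y)) = cos (2 * x) * cos (2 * y) + sin (2 * x) * sin (2 * y)"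
  using cos_diff[of "2 * x" "2 * y"] by (simp add: right_diff_distrib)

lemma sum_cos_double_diff:
  fixes m :: "real \<Rightarrow> real"
  shows "(\<Sum>e\<in>E. m e * cos (2 * (\<theta> - e))) =
    cos (2 * \<theta>) * (\<Sum>e\<in>E. m e * cos (2 * e)) + sin (2 * \<theta>) * (\<Sum>e\<in>E. m e * sin (2 * e))"
proof -
  have "cos (2 * (\<theta> - e)) = cos (2 * \<theta>) * cos (2 * e) + sin (2 * \<theta>) * sin (2 * e)" for e
    by (rule cos_double_diff)
  then show ?thesis
    by (simp add: sum_distrib_left sum.distrib[symmetric] algebra_simps)
qed

lemma sinusoid_level_gap:
  fixes A B v x y :: real
  assumes hx: "A * cos (2 * x) + B * sin (2 * x) = v" and hy: "A * cos (2 * y) + B * sin (2 * y) = v"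
    and "0 < y - x" "y - x < pi"
  shows "v\<^sup>2 = (A\<^sup>2 + B\<^sup>2) * (cos (y - x))\<^sup>2"
proof -
  define m where "m = x + y"
  define l where "l = y - x"
  define V where "V = A * cos m + B * sin m"
  define U where "U = A * sin m - B * cos m"
  have "2 * x = m - l" "2 * y = m + l"
    unfolding m_def l_def by simp_all
  then have vx: "v = A * cos (m - l) + B * sin (m - l)" and vy: "v = A * cos (m + l) + B * sin (m + l)"
    using hx hy by simp_all
  have v1: "v = V * cos l + U * sin l"
    using vx unfolding V_def U_def cos_diff sin_diff by (simp add: algebra_simps)
  have v2: "v = V * cos l - U * sin l"
    using vy unfolding V_def U_def cos_add sin_add by (simp add: algebra_simps)
  from v1 v2 have "U * sin l = 0"
    by linarith
  moreover have "sin l > 0"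
    unfolding l_def using assms(3,4) by (intro sin_gt_zero) auto
  ultimately have "U = 0"
    by simp
  with v1 have "v = V * cos l"
    by simp
  moreover have "V\<^sup>2 + U\<^sup>2 = A\<^sup>2 * ((sin m)\<^sup>2 + (cos m)\<^sup>2) + B\<^sup>2 * ((sin m)\<^sup>2 + (cos m)\<^sup>2)"
    unfolding V_def U_def by algebra
  ultimately show ?thesis
    using \<open>U = 0\<close> unfolding l_def by (simp add: power_mult_distrib)
qed

lemma no_equal_amplitude_level_gaps:
  fixes A B A' B' v x y x' y' :: real
  assumes "A\<^sup>2 + B\<^sup>2 = A'\<^sup>2 + B'\<^sup>2" "v \<noteq> 0"
    and "A * cos (2 * x) + B * sin (2 * x) = v" "A * cos (2 * y) + B * sin (2 * y) = v"
    and "pi/4 \<le> y - x" "y - x < pi/2"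
    and "A' * cos (2 * x') + B' * sin (2 * x') = v" "A' * cos (2 * y') + B' * sin (2 * y') = v"
    and "0 < y' - x'" "y' - x' < pi/4"
  shows False
proof -
  have outer: "v\<^sup>2 = (A\<^sup>2 + B\<^sup>2) * (cos (y - x))\<^sup>2"
    using assms(3-6) by (intro sinusoid_level_gap) auto
  have inner: "v\<^sup>2 = (A\<^sup>2 + B\<^sup>2) * (cos (y' - x'))\<^sup>2"
    unfolding assms(1) using assms(7-10) by (intro sinusoid_level_gap) auto
  have "0 < cos (y - x)" "cos (y - x) \<le> cos (pi/4)"
    using assms(5,6) by (auto intro!: cos_gt_zero_pi cos_monotone_0_pi_le)
  moreover have "cos (pi/4) < cos (y' - x')"
    using assms(9,10) by (intro cos_monotone_0_pi) auto
  ultimately have "(cos (y - x))\<^sup>2 < (cos (y' - x'))\<^sup>2"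
    by (intro power_strict_mono) auto
  moreover have "A\<^sup>2 + B\<^sup>2 \<noteq> 0"
    using outer \<open>v \<noteq> 0\<close> by auto
  ultimately show False
    using outer inner by (simp add: sum_power2_ge_zero less_le)
qed

text \<open>The hypotheses are the values of \<open>Hsum\<close> (below) at the first three and the last of at least
  four jumps. Beyond \<open>a2\<close> the sinusoid is \<open>(P - p, Q - q)\<close>; the levels at \<open>a1\<close> and \<open>a2\<close> force it
  to have the amplitude of \<open>(P, Q)\<close>.\<close>
lemma jump_levels_incompatible:
  fixes P Q a1 a2 a3 aN v :: real
  assumes "a1 < a2" "a2 < a3" "a3 \<le> aN" "aN - a1 \<le> pi/4" "v \<noteq> 0"
    and h1: "P * cos (2 * a1) + Q * sin (2 * a1) = v"
    and hN: "- (P * cos (2 * aN) + Q * sin (2 * aN)) = v"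
    and h2: "P * cos (2 * a2) + Q * sin (2 * a2) + (1 - cos (2 * (a2 - a1))) = v"
    and h3: "P * cos (2 * a3) + Q * sin (2 * a3)
      + (1 - cos (2 * (a3 - a1))) - (1 - cos (2 * (a3 - a2))) = v"
  shows False
proof -
  define p where "p = cos (2 * a1) - cos (2 * a2)"
  define q where "q = sin (2 * a1) - sin (2 * a2)"
  have "(P - p) * cos (2 * a2) + (Q - q) * sin (2 * a2) = P * cos (2 * a2) + Q * sin (2 * a2)
      - cos (2 * (a2 - a1)) + ((sin (2 * a2))\<^sup>2 + (cos (2 * a2))\<^sup>2)"
    unfolding p_def q_def cos_double_diff by algebra
  then have h2': "(P - p) * cos (2 * a2) + (Q - q) * sin (2 * a2) = v"
    using h2 by simp
  have h3': "(P - p) * cos (2 * a3) + (Q - q) * sin (2 * a3) = v"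
    using h3 unfolding p_def q_def cos_double_diff by (simp add: algebra_simps)
  have "(P - p)\<^sup>2 + (Q - q)\<^sup>2 = P\<^sup>2 + Q\<^sup>2
      + 2 * ((P - p) * cos (2 * a2) + (Q - q) * sin (2 * a2)) - 2 * (P * cos (2 * a1) + Q * sin (2 * a1))
      + ((cos (2 * a1))\<^sup>2 + (sin (2 * a1))\<^sup>2) - ((cos (2 * a2))\<^sup>2 + (sin (2 * a2))\<^sup>2)"
    unfolding p_def q_def by algebra
  then have "P\<^sup>2 + Q\<^sup>2 = (P - p)\<^sup>2 + (Q - q)\<^sup>2"
    using h1 h2' by simp
  moreover have "P * cos (2 * (aN - pi/2)) + Q * sin (2 * (aN - pi/2)) = v"
    using hN by (simp add: right_diff_distrib cos_diff sin_diff)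
  ultimately show False
    using assms(1-5) h1 h2' h3'
    by (intro no_equal_amplitude_level_gaps[where A=P and B=Q and A'="P - p" and B'="Q - q"
          and x="aN - pi/2" and y=a1 and x'=a2 and y'=a3]) auto
qed

section \<open>Test functions\<close>

definition cutoff :: "real \<Rightarrow> real" where
  "cutoff t = pos_sq (1 - t * t)"

definition cutoff' :: "real \<Rightarrow> real" where
  "cutoff' t = (1 - t * t + \<bar>1 - t * t\<bar>) * (- 2 * t)"

lemma cutoff_has_derivative: "(cutoff has_real_derivative cutoff' t) (at t)"
  unfolding cutoff_def cutoff'_def
  by (rule DERIV_chain2[OF pos_sq_has_derivative]) (auto intro!: derivative_eq_intros)

lemma continuous_on_cutoff: "continuous_on UNIV cutoff"
  using cutoff_has_derivative by (meson DERIV_isCont continuous_at_imp_continuous_on)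

lemma continuous_on_cutoff': "continuous_on UNIV cutoff'"
  unfolding cutoff'_def by (intro continuous_intros)

lemma cutoff_outside:
  assumes "1 \<le> \<bar>t\<bar>"
  shows "cutoff t = 0" "cutoff' t = 0"
proof -
  have "1 * 1 \<le> \<bar>t\<bar> * \<bar>t\<bar>"
    using assms by (intro mult_mono) auto
  then have "1 - t * t \<le> 0"
    by (simp add: abs_mult_self_eq)
  then show "cutoff t = 0" "cutoff' t = 0"
    unfolding cutoff_def cutoff'_def by (simp_all add: pos_sq_nonpos_eq)
qed

lemma cutoff_has_integral: "((\<lambda>t. cutoff' t * K1 + cutoff t * K2) has_integral 16/15 * K2) UNIV"
proof -
  define A where "A t = cutoff t * K1 + (t - 2 * t ^ 3 / 3 + t ^ 5 / 5) * K2" for t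
  have "(A has_vector_derivative cutoff' t * K1 + cutoff t * K2) (at t within {-1..1})"
    if t: "t \<in> {-1..1}" for t
  proof -
    have "t\<^sup>2 \<le> 1"
      using t by (simp add: abs_square_le_1 abs_le_iff)
    then have "cutoff t = 1 - 2 * t ^ 2 + t ^ 4"
      unfolding cutoff_def by (simp add: pos_sq_nonneg_eq power2_eq_square) algebra
    moreover have "(A has_real_derivative cutoff' t * K1 + (1 - 2 * t ^ 2 + t ^ 4) * K2) (at t)"
      unfolding A_def by (rule derivative_eq_intros cutoff_has_derivative refl | simp)+
    ultimately show ?thesis
      by (simp add: has_real_derivative_iff_has_vector_derivative has_vector_derivative_at_within)
  qed
  from fundamental_theorem_of_calculus[OF _ this]
  have "((\<lambda>t. cutoff' t * K1 + cutoff t * K2) has_integral A 1 - A (-1)) {-1..1}"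
    by simp
  moreover have "A 1 - A (-1) = 16/15 * K2"
    unfolding A_def using cutoff_outside[of 1] cutoff_outside[of "-1"] by simp
  ultimately have int: "((\<lambda>t. cutoff' t * K1 + cutoff t * K2) has_integral 16/15 * K2) {-1..1}"
    by simp
  show ?thesis
  proof (rule has_integral_on_superset[OF int])
    fix t :: real
    assume "t \<notin> {-1..1}"
    then have "1 \<le> \<bar>t\<bar>"
      by auto
    then show "cutoff' t * K1 + cutoff t * K2 = 0"
      using cutoff_outside by simp
  qed simp
qed

definition transported_test :: "(real \<Rightarrow> real) \<Rightarrow> real \<Rightarrow> real \<times> real \<Rightarrow> real" where
  "transported_test \<psi> c p = cutoff (fst p) * \<psi> (snd p - c * fst p)"

definition transported_test_deriv ::
    "(real \<Rightarrow> real) \<Rightarrow> (real \<Rightarrow> real) \<Rightarrow> real \<Rightarrow> real \<times> real \<Rightarrow> real \<times> real \<Rightarrow> real" where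
  "transported_test_deriv \<psi> \<psi>' c p v =
     cutoff' (fst p) * fst v * \<psi> (snd p - c * fst p)
     + cutoff (fst p) * \<psi>' (snd p - c * fst p) * (snd v - c * fst v)"

lemma test_fun_transported_test:
  assumes \<psi>: "\<And>x. (\<psi> has_real_derivative \<psi>' x) (at x)" and "continuous_on UNIV \<psi>'"
    and per: "\<And>x. \<psi> (x + pi/2) = \<psi> x"
  shows "test_fun (transported_test \<psi> c) (transported_test_deriv \<psi> \<psi>' c)"
proof -
  have "continuous_on UNIV \<psi>"
    using \<psi> by (meson DERIV_isCont continuous_at_imp_continuous_on)
  have "(transported_test \<psi> c has_derivative transported_test_deriv \<psi> \<psi>' c p) (at p)" for p
  proof -
    have "((\<lambda>p::real \<times> real. snd p - c * fst p) has_derivative (\<lambda>v. snd v - c * fst v)) (at p)"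
      by (rule bounded_linear_imp_has_derivative) (intro bounded_linear_intros)
    then have d\<psi>: "((\<lambda>p. \<psi> (snd p - c * fst p)) has_derivative
        (\<lambda>v. (snd v - c * fst v) * \<psi>' (snd p - c * fst p))) (at p)"
      by (rule DERIV_compose_FDERIV[OF \<psi>])
    have dcut: "((\<lambda>p::real \<times> real. cutoff (fst p)) has_derivative (\<lambda>v. fst v * cutoff' (fst p))) (at p)"
      by (rule DERIV_compose_FDERIV[OF cutoff_has_derivative has_derivative_fst[OF has_derivative_ident]])
    show ?thesis
      unfolding transported_test_def
      by (rule has_derivative_eq_rhs[OF has_derivative_mult[OF dcut d\<psi>]])
        (auto simp: transported_test_deriv_def algebra_simps)
  qed
  moreover have "continuous_on UNIV (\<lambda>p. transported_test_deriv \<psi> \<psi>' c p v)" for v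
    unfolding transported_test_deriv_def
    by (intro continuous_intros continuous_on_compose2[OF continuous_on_cutoff]
        continuous_on_compose2[OF continuous_on_cutoff'] continuous_on_compose2[OF \<open>continuous_on UNIV \<psi>\<close>]
        continuous_on_compose2[OF \<open>continuous_on UNIV \<psi>'\<close>]) auto
  moreover have "transported_test \<psi> c (t, \<theta> + pi/2) = transported_test \<psi> c (t, \<theta>)" for t \<theta>
    unfolding transported_test_def using per[of "\<theta> - c * t"] by (simp add: algebra_simps)
  moreover have "transported_test \<psi> c (t, \<theta>) = 0" if "1 \<le> \<bar>t\<bar>" for t \<theta>
    unfolding transported_test_def using cutoff_outside[OF that] by simp
  ultimately show ?thesis
    unfolding test_fun_def by blast
qed

lemma periodic_bump_exists:
  fixes E :: "real set"
  assumes "finite E" "E \<subseteq> {-pi/8..pi/8}" "e0 \<in> {-pi/8..pi/8}"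
  obtains \<psi> \<psi>' where "\<And>x. (\<psi> has_real_derivative \<psi>' x) (at x)" "continuous_on UNIV \<psi>'"
    "\<And>x. \<psi> (x + pi/2) = \<psi> x" "\<psi> e0 > 0" "\<And>e. e \<in> E \<Longrightarrow> e \<noteq> e0 \<Longrightarrow> \<psi> e = 0"
proof -
  define \<kappa> where "\<kappa> = Max (insert 0 ((\<lambda>e. cos (4 * (e - e0))) ` (E - {e0})))"
  have "cos (4 * (e - e0)) < 1" if "e \<in> E" "e \<noteq> e0" for e
  proof -
    have "0 < \<bar>4 * (e - e0)\<bar>" "\<bar>4 * (e - e0)\<bar> \<le> pi"
      using that assms(2,3) by (auto simp: abs_if)
    then have "cos \<bar>4 * (e - e0)\<bar> < cos 0"
      by (intro cos_monotone_0_pi) auto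
    then show ?thesis
      by simp
  qed
  then have "\<kappa> < 1"
    unfolding \<kappa>_def using assms(1) by (subst Max_less_iff) auto
  have \<kappa>_ge: "cos (4 * (e - e0)) \<le> \<kappa>" if "e \<in> E" "e \<noteq> e0" for e
    unfolding \<kappa>_def using that assms(1) by (intro Max_ge) auto
  define \<psi> where "\<psi> x = pos_sq (cos (4 * (x - e0)) - \<kappa>)" for x
  define \<psi>' where "\<psi>' x = (cos (4 * (x - e0)) - \<kappa> + \<bar>cos (4 * (x - e0)) - \<kappa>\<bar>) * (- (sin (4 * (x - e0)) * 4))" for x
  show ?thesis
  proof
    show "(\<psi> has_real_derivative \<psi>' x) (at x)" for x
      unfolding \<psi>_def \<psi>'_def
      by (rule DERIV_chain2[OF pos_sq_has_derivative]) (auto intro!: derivative_eq_intros)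
    show "continuous_on UNIV \<psi>'"
      unfolding \<psi>'_def by (intro continuous_intros)
    show "\<psi> (x + pi/2) = \<psi> x" for x
      using cos_periodic[of "4 * (x - e0)"] by (simp add: \<psi>_def algebra_simps)
    show "\<psi> e0 > 0"
      unfolding \<psi>_def using \<open>\<kappa> < 1\<close> by (intro pos_sq_pos) simp
    show "\<psi> e = 0" if "e \<in> E" "e \<noteq> e0" for e
      unfolding \<psi>_def using \<kappa>_ge[OF that] by (intro pos_sq_nonpos_eq) simp
  qed
qed

section \<open>Finite unions of intervals\<close>

locale interval_union =
  fixes I :: "real set" and F :: "real set set"
  assumes finite_F: "finite F"
    and interval_F: "\<And>J. J \<in> F \<Longrightarrow> is_interval J"
    and nonempty_F: "{} \<notin> F"
    and disjoint_F: "pairwise disjnt F"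
    and I_eq: "I = \<Union>F"
    and I_subset: "I \<subseteq> {-pi/8..pi/8}"
begin

lemma member_F_bounds:
  assumes "J \<in> F"
  shows "-pi/8 \<le> Inf J" "Inf J \<le> Sup J" "Sup J \<le> pi/8"
    "J \<subseteq> {Inf J..Sup J}" "{Inf J<..<Sup J} \<subseteq> J"
proof -
  have "J \<noteq> {}" "J \<subseteq> {-pi/8..pi/8}"
    using assms nonempty_F I_eq I_subset by auto
  from bounded_interval_Inf_Sup[OF interval_F[OF assms] this]
  show "-pi/8 \<le> Inf J" "Inf J \<le> Sup J" "Sup J \<le> pi/8"
    "J \<subseteq> {Inf J..Sup J}" "{Inf J<..<Sup J} \<subseteq> J"
    by simp_all
qed

lemma member_F_has_integral:
  fixes f :: "real \<Rightarrow> real"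
  assumes "J \<in> F" and "(f has_integral y) {Inf J..Sup J}"
  shows "(f has_integral y) J"
proof -
  have "J \<noteq> {}" "J \<subseteq> {-pi/8..pi/8}"
    using assms nonempty_F I_eq I_subset by auto
  then show ?thesis
    using has_integral_bounded_interval interval_F assms by blast
qed

lemma per_ind_eq_indicator:
  assumes "x \<in> {-pi/4..pi/4}"
  shows "per_ind I x = indicator I x"
proof -
  have "k = 0" if k: "x - of_int k * (pi/2) \<in> I" for k :: int
  proof -
    have "-pi/8 \<le> x - of_int k * (pi/2)" "x - of_int k * (pi/2) \<le> pi/8"
      using k I_subset by auto
    moreover have "-pi/4 \<le> x" "x \<le> pi/4"
      using assms by auto
    ultimately have "of_int k * (pi/2) \<le> (3/4) * (pi/2)" "(-3/4) * (pi/2) \<le> of_int k * (pi/2)"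
      by linarith+
    then have "real_of_int k \<le> 3/4" "-3/4 \<le> real_of_int k"
      using pi_half_gt_zero by (meson mult_le_cancel_right_pos)+
    then show "k = 0"
      by linarith
  qed
  then have "(\<exists>k::int. x - of_int k * (pi/2) \<in> I) \<longleftrightarrow> x \<in> I"
    by (metis add_0 diff_zero mult_zero_left of_int_0)
  then show ?thesis
    unfolding per_ind_def by (simp add: indicator_def)
qed

lemma per_ind_has_integral:
  fixes f :: "real \<Rightarrow> real"
  assumes "\<And>J. J \<in> F \<Longrightarrow> (f has_integral i J) J"
  shows "((\<lambda>x. per_ind I x * f x) has_integral sum i F) {-pi/4..pi/4}"
proof -
  have "pairwise (\<lambda>S S'. negligible (S \<inter> S')) F"
    using disjoint_F unfolding pairwise_def disjnt_def by auto
  from has_integral_Union[OF finite_F assms this]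
  have "(f has_integral sum i F) I"
    unfolding I_eq .
  then have "((\<lambda>x. if x \<in> I then f x else 0) has_integral sum i F) {-pi/4..pi/4}"
    using I_subset by (subst has_integral_restrict) (auto simp: divide_simps)
  then show ?thesis
    by (rule has_integral_cong[THEN iffD1, rotated]) (simp add: per_ind_eq_indicator)
qed

lemma per_ind_times_continuous_integrable:
  assumes "continuous_on {-pi/8..pi/8} g"
  shows "(\<lambda>x. per_ind I x * g x) integrable_on {-pi/4..pi/4}"
proof -
  have "(g has_integral integral {Inf J..Sup J} g) J" if "J \<in> F" for J
  proof (rule member_F_has_integral[OF that])
    have "{Inf J..Sup J} \<subseteq> {-pi/8..pi/8}"
      using member_F_bounds[OF that] by auto
    then show "(g has_integral integral {Inf J..Sup J} g) {Inf J..Sup J}"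
      by (intro integrable_integral integrable_continuous_interval continuous_on_subset[OF assms])
  qed
  then have "((\<lambda>x. per_ind I x * g x) has_integral (\<Sum>J\<in>F. integral {Inf J..Sup J} g))
      {-pi/4..pi/4}"
    by (rule per_ind_has_integral)
  then show ?thesis
    by (rule has_integral_integrable)
qed

definition endpoints :: "real set" where
  "endpoints = Inf ` F \<union> Sup ` F"

text \<open>The jump of the indicator of \<open>I\<close> at \<open>e\<close>; intervals that touch at \<open>e\<close> cancel.\<close>
definition jump :: "real \<Rightarrow> real" where
  "jump e = real (card {J\<in>F. Inf J = e}) - real (card {J\<in>F. Sup J = e})"

definition jumps :: "real set" where
  "jumps = {e \<in> endpoints. jump e \<noteq> 0}"

lemma finite_endpoints: "finite endpoints"
  unfolding endpoints_def using finite_F by simp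

lemma finite_jumps: "finite jumps"
  unfolding jumps_def using finite_endpoints by simp

lemma endpoints_subset: "endpoints \<subseteq> {-pi/8..pi/8}"
  unfolding endpoints_def using member_F_bounds by fastforce

lemma jumps_subset: "jumps \<subseteq> {-pi/8..pi/8}"
  unfolding jumps_def using endpoints_subset by auto

lemma sum_endpoints_eq_sum_jumps:
  fixes \<Phi> :: "real \<Rightarrow> real"
  shows "(\<Sum>J\<in>F. \<Phi> (Inf J) - \<Phi> (Sup J)) = (\<Sum>e\<in>jumps. jump e * \<Phi> e)"
proof -
  have "(\<Sum>J\<in>F. \<Phi> (Inf J)) = (\<Sum>e\<in>endpoints. real (card {J\<in>F. Inf J = e}) * \<Phi> e)"
    by (rule sum_comp_card_fibres[OF finite_F finite_endpoints]) (auto simp: endpoints_def)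
  moreover have "(\<Sum>J\<in>F. \<Phi> (Sup J)) = (\<Sum>e\<in>endpoints. real (card {J\<in>F. Sup J = e}) * \<Phi> e)"
    by (rule sum_comp_card_fibres[OF finite_F finite_endpoints]) (auto simp: endpoints_def)
  ultimately have "(\<Sum>J\<in>F. \<Phi> (Inf J) - \<Phi> (Sup J)) = (\<Sum>e\<in>endpoints. jump e * \<Phi> e)"
    by (simp add: sum_subtractf jump_def left_diff_distrib)
  also have "\<dots> = (\<Sum>e\<in>jumps. jump e * \<Phi> e)"
    unfolding jumps_def by (rule sum.mono_neutral_right[OF finite_endpoints]) auto
  finally show ?thesis .
qed

lemma sum_jumps_eq_0: "(\<Sum>e\<in>jumps. jump e) = 0"
  using sum_endpoints_eq_sum_jumps[of "\<lambda>_. 1"] by simp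

lemma indicator_eq_sum_jumps:
  assumes "\<theta> \<notin> endpoints"
  shows "indicator I \<theta> = (\<Sum>e\<in>{e\<in>jumps. e < \<theta>}. jump e)"
proof -
  have "(\<Sum>e\<in>{e\<in>jumps. e < \<theta>}. jump e) = (\<Sum>e\<in>jumps. jump e * of_bool (e < \<theta>))"
    by (auto simp: sum.inter_filter[OF finite_jumps] intro!: sum.cong)
  also have "\<dots> = (\<Sum>J\<in>F. of_bool (Inf J < \<theta>) - of_bool (Sup J < \<theta>))"
    by (rule sum_endpoints_eq_sum_jumps[symmetric])
  also have "\<dots> = (\<Sum>J\<in>F. indicator J \<theta>)"
  proof (rule sum.cong[OF refl])
    fix J assume J: "J \<in> F"
    have ne: "\<theta> \<noteq> Inf J" "\<theta> \<noteq> Sup J"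
      using J assms unfolding endpoints_def by auto
    then have "\<theta> \<in> J \<longleftrightarrow> Inf J < \<theta> \<and> \<theta> < Sup J"
      using member_F_bounds[OF J] by fastforce
    then show "of_bool (Inf J < \<theta>) - of_bool (Sup J < \<theta>) = (indicator J \<theta> :: real)"
      using ne member_F_bounds(2)[OF J] by (auto simp: indicator_def)
  qed
  also have "\<dots> = indicator I \<theta>"
  proof -
    have "disjoint_family_on id F"
      using disjoint_F unfolding disjoint_family_on_def disjoint_def by auto
    then have "indicator (\<Union>(id ` F)) \<theta> = (\<Sum>J\<in>F. indicator (id J) \<theta> :: real)"
      by (rule indicator_UN_disjoint[OF finite_F])
    then show ?thesis
      unfolding I_eq by (simp only: id_apply image_id)
  qed
  finally show ?thesis
    by (rule sym)
qed

lemma per_ind_integration_by_parts: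
  fixes G g :: "real \<Rightarrow> real"
  assumes G: "\<And>x. x \<in> {-pi/8..pi/8} \<Longrightarrow> (G has_real_derivative g x) (at x)"
  shows "((\<lambda>x. per_ind I x * g x) has_integral - (\<Sum>e\<in>jumps. jump e * G e)) {-pi/4..pi/4}"
proof -
  have "(g has_integral G (Sup J) - G (Inf J)) J" if J: "J \<in> F" for J
  proof (rule member_F_has_integral[OF J])
    note bounds = member_F_bounds[OF J]
    have "(G has_vector_derivative g x) (at x within {Inf J..Sup J})" if "x \<in> {Inf J..Sup J}" for x
      using G[of x] that bounds
      by (simp add: has_real_derivative_iff_has_vector_derivative has_vector_derivative_at_within)
    then show "(g has_integral G (Sup J) - G (Inf J)) {Inf J..Sup J}"
      by (rule fundamental_theorem_of_calculus[OF bounds(2)])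
  qed
  then have "((\<lambda>x. per_ind I x * g x) has_integral (\<Sum>J\<in>F. G (Sup J) - G (Inf J))) {-pi/4..pi/4}"
    by (rule per_ind_has_integral)
  moreover have "(\<Sum>J\<in>F. G (Sup J) - G (Inf J)) = - (\<Sum>e\<in>jumps. jump e * G e)"
    unfolding sum_endpoints_eq_sum_jumps[symmetric] by (simp add: sum_subtractf)
  ultimately show ?thesis
    by simp
qed

definition H0 :: "real \<Rightarrow> real" where
  "H0 = Hfun (per_ind I)"

definition Hsum :: "real \<Rightarrow> real" where
  "Hsum \<theta> = (\<Sum>e\<in>jumps. jump e * sin_abs_sin (\<theta> - e))"

lemma H0_eq_Hsum:
  assumes "\<theta> \<in> {-3*pi/8<..<3*pi/8}"
  shows "H0 \<theta> = pi / 8 * Hsum \<theta>"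
proof -
  have "((\<lambda>x. - sin_abs_sin (\<theta> - x)) has_real_derivative \<bar>sin (2 * (\<theta> - x))\<bar>) (at x)"
    if "x \<in> {-pi/8..pi/8}" for x
  proof -
    have "-3*pi/8 < \<theta>" "\<theta> < 3*pi/8" "-pi/8 \<le> x" "x \<le> pi/8"
      using assms that by auto
    then have "\<bar>\<theta> - x\<bar> < pi/2"
      unfolding abs_less_iff using pi_gt_zero by linarith
    then show ?thesis
      by (auto intro!: derivative_eq_intros DERIV_chain2[OF sin_abs_sin_has_derivative])
  qed
  from per_ind_integration_by_parts[OF this]
  have "((\<lambda>x. \<bar>sin (2 * (\<theta> - x))\<bar> * per_ind I x) has_integral Hsum \<theta>) {-pi/4..pi/4}"
    by (simp add: Hsum_def mult.commute sum_negf)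
  then show ?thesis
    unfolding H0_def Hfun_def by (simp add: integral_unique)
qed

lemma H0_has_derivative:
  assumes "x \<in> {-pi/8..pi/8}"
  shows "(H0 has_real_derivative deriv H0 x) (at x)"
proof -
  have "((\<lambda>\<theta>. sin_abs_sin (\<theta> - e)) has_real_derivative \<bar>sin (2 * (x - e))\<bar>) (at x)"
    if "e \<in> jumps" for e
  proof -
    have "-pi/8 \<le> x" "x \<le> pi/8" "-pi/8 \<le> e" "e \<le> pi/8"
      using assms subsetD[OF jumps_subset that] by auto
    then have "\<bar>x - e\<bar> < pi/2"
      unfolding abs_less_iff using pi_gt_zero by linarith
    from DERIV_chain2[OF sin_abs_sin_has_derivative[OF this] DERIV_diff[OF DERIV_ident DERIV_const]]
    show ?thesis
      by simp
  qed
  then have "((\<lambda>\<theta>. pi / 8 * Hsum \<theta>) has_real_derivative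
      pi / 8 * (\<Sum>e\<in>jumps. jump e * \<bar>sin (2 * (x - e))\<bar>)) (at x)"
    unfolding Hsum_def by (intro DERIV_cmult DERIV_sum) auto
  then have "(H0 has_real_derivative pi / 8 * (\<Sum>e\<in>jumps. jump e * \<bar>sin (2 * (x - e))\<bar>)) (at x)"
  proof (rule has_field_derivative_transform_within_open[where S="{-3*pi/8<..<3*pi/8}"])
    show "x \<in> {-3*pi/8<..<3*pi/8}"
      using assms pi_gt_zero unfolding atLeastAtMost_iff greaterThanLessThan_iff by linarith
    show "pi / 8 * Hsum y = H0 y" if "y \<in> {-3*pi/8<..<3*pi/8}" for y
      using H0_eq_Hsum[OF that] by simp
  qed simp
  then show ?thesis
    by (simp add: DERIV_imp_deriv)
qed

lemma H0_periodic: "H0 (x + pi/2) = H0 x"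
  unfolding H0_def by (rule Hfun_periodic)

lemma Hfun_per_ind_shift: "Hfun (\<lambda>x. per_ind I (x - s)) \<theta> = H0 (\<theta> - s)"
proof -
  define f where "f x = per_ind I x * \<bar>sin (2 * (\<theta> - s - x))\<bar>" for x
  have "f integrable_on {-pi/4..pi/4}"
    unfolding f_def by (intro per_ind_times_continuous_integrable continuous_intros)
  moreover have "f (x + pi/2) = f x" for x
    using per_ind_periodic[of I x] sin_periodic_pi[of "2 * (\<theta> - s - x) - pi"]
    by (simp add: f_def algebra_simps)
  ultimately have "((\<lambda>x. f (x + - s)) has_integral integral {-pi/4..pi/4} f) {-pi/4..pi/4}"
    by (intro has_integral_periodic_shift[where p="pi/2"]) auto
  moreover have "(\<lambda>x. f (x + - s)) = (\<lambda>x. \<bar>sin (2 * (\<theta> - x))\<bar> * per_ind I (x - s))"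
    by (auto simp: f_def algebra_simps)
  ultimately show ?thesis
    unfolding H0_def Hfun_def f_def by (simp add: integral_unique mult.commute)
qed

lemma per_ind_weak_integrand_has_integral:
  fixes \<psi> \<psi>' :: "real \<Rightarrow> real"
  assumes \<psi>: "\<And>x. (\<psi> has_real_derivative \<psi>' x) (at x)"
  shows "((\<lambda>x. per_ind I x * (a * \<psi> x + b * ((2 * H0 x - c) * \<psi>' x + 2 * deriv H0 x * \<psi> x)))
      has_integral a * integral {-pi/4..pi/4} (\<lambda>x. per_ind I x * \<psi> x)
        - b * (\<Sum>e\<in>jumps. jump e * ((2 * H0 e - c) * \<psi> e))) {-pi/4..pi/4}"
    (is "(?\<Phi> has_integral a * ?K1 - b * ?S) _")
proof -
  define g where "g x = (2 * H0 x - c) * \<psi>' x + 2 * deriv H0 x * \<psi> x" for x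
  have "((\<lambda>x. (2 * H0 x - c) * \<psi> x) has_real_derivative g x) (at x)" if "x \<in> {-pi/8..pi/8}" for x
    unfolding g_def using H0_has_derivative[OF that] \<psi>[of x]
    by (auto intro!: derivative_eq_intros simp: algebra_simps)
  then have "((\<lambda>x. per_ind I x * g x) has_integral - ?S) {-pi/4..pi/4}"
    by (rule per_ind_integration_by_parts)
  moreover have "((\<lambda>x. per_ind I x * \<psi> x) has_integral ?K1) {-pi/4..pi/4}"
    using \<psi> by (intro integrable_integral per_ind_times_continuous_integrable DERIV_continuous_on)
      (rule has_field_derivative_at_within)
  ultimately have "((\<lambda>x. a * (per_ind I x * \<psi> x) + b * (per_ind I x * g x))
      has_integral a * ?K1 + b * - ?S) {-pi/4..pi/4}"
    by (intro has_integral_add has_integral_mult_right)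
  moreover have "(\<lambda>x. a * (per_ind I x * \<psi> x) + b * (per_ind I x * g x)) = ?\<Phi>"
    by (auto simp: g_def algebra_simps)
  ultimately show ?thesis
    by simp
qed

lemma weak_integrand_transported:
  fixes \<psi> \<psi>' :: "real \<Rightarrow> real" and c t :: real
  assumes \<psi>: "\<And>x. (\<psi> has_real_derivative \<psi>' x) (at x)" and per: "\<And>x. \<psi> (x + pi/2) = \<psi> x"
  defines "h \<equiv> \<lambda>\<theta>. per_ind I (\<theta> - c * t)"
  shows "integral {-pi/4..pi/4} (\<lambda>\<theta>. h \<theta> *
      (transported_test_deriv \<psi> \<psi>' c (t, \<theta>) (1, 0)
       + 2 * Hfun h \<theta> * transported_test_deriv \<psi> \<psi>' c (t, \<theta>) (0, 1)
       + 2 * deriv (Hfun h) \<theta> * transported_test \<psi> c (t, \<theta>)))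
    = cutoff' t * integral {-pi/4..pi/4} (\<lambda>x. per_ind I x * \<psi> x)
      - cutoff t * (\<Sum>e\<in>jumps. jump e * ((2 * H0 e - c) * \<psi> e))"
    (is "integral _ ?f = ?y")
proof -
  define \<Phi> where "\<Phi> x = per_ind I x * (cutoff' t * \<psi> x
      + cutoff t * ((2 * H0 x - c) * \<psi>' x + 2 * deriv H0 x * \<psi> x))" for x
  have "\<Phi> (x + pi/2) = \<Phi> x" for x
    using per_ind_periodic has_real_derivative_periodic[OF per \<psi>] per H0_periodic
      deriv_periodic[of H0, OF H0_periodic]
    by (simp add: \<Phi>_def)
  then have "((\<lambda>\<theta>. \<Phi> (\<theta> + - (c * t))) has_integral ?y) {-pi/4..pi/4}"
    using per_ind_weak_integrand_has_integral[OF \<psi>] unfolding \<Phi>_def[abs_def]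
    by (intro has_integral_periodic_shift[where p="pi/2"]) auto
  moreover have "Hfun h = (\<lambda>\<theta>. H0 (\<theta> - c * t))"
    unfolding h_def using Hfun_per_ind_shift by blast
  then have "?f = (\<lambda>\<theta>. \<Phi> (\<theta> + - (c * t)))"
    using deriv_shift[of H0 "- (c * t)"]
    by (auto simp: h_def \<Phi>_def transported_test_deriv_def transported_test_def algebra_simps)
  ultimately show ?thesis
    by (simp add: integral_unique)
qed

lemma weak_solution_jump_sum:
  assumes "euler_weak_sol (\<lambda>t \<theta>. per_ind I (\<theta> - c * t))"
    and \<psi>: "\<And>x. (\<psi> has_real_derivative \<psi>' x) (at x)" "continuous_on UNIV \<psi>'"
      "\<And>x. \<psi> (x + pi/2) = \<psi> x"
  shows "(\<Sum>e\<in>jumps. jump e * ((2 * H0 e - c) * \<psi> e)) = 0"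
proof -
  define K1 where "K1 = integral {-pi/4..pi/4} (\<lambda>x. per_ind I x * \<psi> x)"
  define S where "S = (\<Sum>e\<in>jumps. jump e * ((2 * H0 e - c) * \<psi> e))"
  have "integral UNIV (\<lambda>t. cutoff' t * K1 - cutoff t * S) = 0"
    using assms(1)[unfolded euler_weak_sol_def, rule_format, OF test_fun_transported_test[OF \<psi>, of c]]
    unfolding weak_integrand_transported[OF \<psi>(1,3)] K1_def S_def .
  moreover have "((\<lambda>t. cutoff' t * K1 - cutoff t * S) has_integral 16/15 * - S) UNIV"
    using cutoff_has_integral[of K1 "- S"] by simp
  ultimately show ?thesis
    unfolding S_def by (simp add: integral_unique)
qed

lemma rotating_imp_H0_constant_on_jumps:
  assumes "rotating (per_ind I)"
  obtains c where "c \<noteq> 0" "\<And>e. e \<in> jumps \<Longrightarrow> 2 * H0 e = c"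
proof -
  obtain c where "c \<noteq> 0" and sol: "euler_weak_sol (\<lambda>t \<theta>. per_ind I (\<theta> - c * t))"
    using assms unfolding rotating_def by blast
  have "2 * H0 e = c" if e: "e \<in> jumps" for e
  proof -
    obtain \<psi> \<psi>' where \<psi>: "\<And>x. (\<psi> has_real_derivative \<psi>' x) (at x)" "continuous_on UNIV \<psi>'"
        "\<And>x. \<psi> (x + pi/2) = \<psi> x" and "\<psi> e > 0"
      and vanish: "\<And>e'. e' \<in> jumps \<Longrightarrow> e' \<noteq> e \<Longrightarrow> \<psi> e' = 0"
      using periodic_bump_exists[OF finite_jumps jumps_subset, of e] e jumps_subset by blast
    have "(\<Sum>e'\<in>jumps. jump e' * ((2 * H0 e' - c) * \<psi> e')) = jump e * ((2 * H0 e - c) * \<psi> e)"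
      using vanish by (subst sum.remove[OF finite_jumps e]) (auto intro!: sum.neutral)
    then have "jump e * ((2 * H0 e - c) * \<psi> e) = 0"
      using weak_solution_jump_sum[OF sol \<psi>] by simp
    moreover have "jump e \<noteq> 0"
      using e unfolding jumps_def by simp
    ultimately show ?thesis
      using \<open>\<psi> e > 0\<close> by simp
  qed
  with \<open>c \<noteq> 0\<close> show ?thesis
    using that by blast
qed

lemma sum_jumps_atMost_in_01: "(\<Sum>e\<in>{e\<in>jumps. e \<le> a}. jump e) \<in> {0, 1}"
proof -
  define b where "b = Min (insert (a + 1) {e\<in>jumps. a < e})"
  have "a < b"
    unfolding b_def using finite_jumps by (subst Min_gr_iff) auto
  have gap: "e \<le> a \<or> b \<le> e" if "e \<in> jumps" for e
    unfolding b_def using finite_jumps that by (cases "a < e") (auto intro: Min_le)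
  obtain \<theta> where \<theta>: "a < \<theta>" "\<theta> < b" "\<theta> \<notin> endpoints"
    using finite_avoid_between[OF finite_endpoints \<open>a < b\<close>] .
  have "e < \<theta> \<longleftrightarrow> e \<le> a" if "e \<in> jumps" for e
    using gap[OF that] \<theta>(1,2) by auto
  then have "{e\<in>jumps. e < \<theta>} = {e\<in>jumps. e \<le> a}"
    by auto
  moreover have "indicator I \<theta> \<in> {0, 1::real}"
    by (simp add: indicator_def)
  ultimately show ?thesis
    using indicator_eq_sum_jumps[OF \<theta>(3)] by simp
qed

lemma first_two_jumps:
  assumes "jumps \<noteq> {}"
  obtains e1 e2 where "e1 \<in> jumps" "e2 \<in> jumps" "e1 < e2" "jump e1 = 1" "jump e2 = -1"
    "\<And>e. e \<in> jumps - {e1} \<Longrightarrow> e2 \<le> e"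
proof -
  have jump_nonzero: "jump e \<noteq> 0" if "e \<in> jumps" for e
    using that unfolding jumps_def by simp
  define e1 where "e1 = Min jumps"
  have e1: "e1 \<in> jumps" "\<And>e. e \<in> jumps \<Longrightarrow> e1 \<le> e"
    unfolding e1_def using finite_jumps assms by auto
  have "jumps \<noteq> {e1}"
    using sum_jumps_eq_0 jump_nonzero[OF e1(1)] by auto
  then have "jumps - {e1} \<noteq> {}"
    using e1(1) by auto
  define e2 where "e2 = Min (jumps - {e1})"
  have "e2 \<in> jumps - {e1}"
    unfolding e2_def using finite_jumps \<open>jumps - {e1} \<noteq> {}\<close> by (intro Min_in) auto
  moreover have "e2 \<le> e" if "e \<in> jumps - {e1}" for e
    unfolding e2_def using finite_jumps that by (intro Min_le) auto
  ultimately have e2: "e2 \<in> jumps" "e2 \<noteq> e1" "\<And>e. e \<in> jumps - {e1} \<Longrightarrow> e2 \<le> e"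
    by blast+
  have "e1 < e2"
    using e1(2)[OF e2(1)] e2(2) by simp
  have "{e\<in>jumps. e \<le> e1} = {e1}"
    using e1 by (auto intro: antisym)
  then have "jump e1 = 1"
    using sum_jumps_atMost_in_01[of e1] jump_nonzero[OF e1(1)] by auto
  have "{e\<in>jumps. e \<le> e2} = {e1, e2}"
    using e1(1) e2 \<open>e1 < e2\<close> by (auto intro: antisym)
  then have "jump e2 = -1"
    using sum_jumps_atMost_in_01[of e2] jump_nonzero[OF e2(1)] e2(2) \<open>jump e1 = 1\<close> by auto
  show ?thesis
    using that e1(1) e2 \<open>e1 < e2\<close> \<open>jump e1 = 1\<close> \<open>jump e2 = -1\<close> by blast
qed

lemma third_jump:
  assumes "e1 \<in> jumps" "e2 \<in> jumps" "e1 < e2" "\<And>e. e \<in> jumps - {e1} \<Longrightarrow> e2 \<le> e"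
    and "jumps \<noteq> {e1, e2}"
  obtains e3 where "e3 \<in> jumps" "e2 < e3" "{e\<in>jumps. e < e3} = {e1, e2}"
proof -
  have "jumps - {e1, e2} \<noteq> {}"
    using assms by auto
  define e3 where "e3 = Min (jumps - {e1, e2})"
  have e3: "e3 \<in> jumps - {e1, e2}"
    unfolding e3_def using finite_jumps \<open>jumps - {e1, e2} \<noteq> {}\<close> by (intro Min_in) auto
  have e3_le: "e3 \<le> e" if "e \<in> jumps - {e1, e2}" for e
    unfolding e3_def using finite_jumps that by (intro Min_le) auto
  have "e2 < e3"
    using assms(4)[of e3] e3 by (auto simp: less_le)
  have "{e\<in>jumps. e < e3} = {e1, e2}"
  proof (intro equalityI subsetI)
    fix e assume "e \<in> {e\<in>jumps. e < e3}"
    then show "e \<in> {e1, e2}"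
      using e3_le[of e] by (cases "e \<in> {e1, e2}") auto
  next
    fix e assume "e \<in> {e1, e2}"
    then show "e \<in> {e\<in>jumps. e < e3}"
      using assms(1-3) \<open>e2 < e3\<close> by auto
  qed
  with e3 \<open>e2 < e3\<close> show ?thesis
    using that by blast
qed

definition cos_coeff :: real where
  "cos_coeff = (\<Sum>e\<in>jumps. jump e * cos (2 * e)) / 2"

definition sin_coeff :: real where
  "sin_coeff = (\<Sum>e\<in>jumps. jump e * sin (2 * e)) / 2"

lemma Hsum_eq_sinusoid:
  assumes "\<theta> \<in> {-pi/8..pi/8}"
  shows "Hsum \<theta> = cos_coeff * cos (2 * \<theta>) + sin_coeff * sin (2 * \<theta>)
    + (\<Sum>e\<in>{e\<in>jumps. e < \<theta>}. jump e * (1 - cos (2 * (\<theta> - e))))"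
proof -
  have "\<bar>\<theta> - e\<bar> \<le> pi/2" if "e \<in> jumps" for e
  proof -
    have "-pi/8 \<le> \<theta>" "\<theta> \<le> pi/8" "-pi/8 \<le> e" "e \<le> pi/8"
      using assms subsetD[OF jumps_subset that] by auto
    then show ?thesis
      unfolding abs_le_iff using pi_gt_zero by linarith
  qed
  then have "Hsum \<theta> = ((\<Sum>e\<in>jumps. jump e * cos (2 * (\<theta> - e))) - sum jump jumps) / 2
      + (\<Sum>e\<in>{e\<in>jumps. e < \<theta>}. jump e * (1 - cos (2 * (\<theta> - e))))"
    unfolding Hsum_def by (rule sum_sin_abs_sin[OF finite_jumps])
  then show ?thesis
    unfolding sum_jumps_eq_0 sum_cos_double_diff cos_coeff_def sin_coeff_def
    by (simp add: algebra_simps)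
qed

lemma Hsum_at_last_jump:
  assumes "\<theta> \<in> jumps" and last: "\<And>e. e \<in> jumps \<Longrightarrow> e \<le> \<theta>"
  shows "Hsum \<theta> = - (cos_coeff * cos (2 * \<theta>) + sin_coeff * sin (2 * \<theta>))"
proof -
  have "{e\<in>jumps. e < \<theta>} = jumps - {\<theta>}"
    using last by (auto simp: less_le)
  moreover have "(\<Sum>e\<in>jumps - {\<theta>}. jump e * (1 - cos (2 * (\<theta> - e))))
      = (\<Sum>e\<in>jumps. jump e * (1 - cos (2 * (\<theta> - e))))"
    using sum.remove[OF finite_jumps assms(1), of "\<lambda>e. jump e * (1 - cos (2 * (\<theta> - e)))"] by simp
  moreover have "\<dots> = sum jump jumps - (\<Sum>e\<in>jumps. jump e * cos (2 * (\<theta> - e)))"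
    by (simp add: sum_subtractf algebra_simps)
  moreover have "\<dots> = - 2 * (cos_coeff * cos (2 * \<theta>) + sin_coeff * sin (2 * \<theta>))"
    unfolding sum_jumps_eq_0 sum_cos_double_diff cos_coeff_def sin_coeff_def by simp
  moreover have "\<theta> \<in> {-pi/8..pi/8}"
    using assms(1) jumps_subset by auto
  ultimately show ?thesis
    using Hsum_eq_sinusoid[of \<theta>] by simp
qed

lemma rotating_imp_Hsum_constant_on_jumps:
  assumes "rotating (per_ind I)"
  obtains v where "v \<noteq> 0" "\<And>e. e \<in> jumps \<Longrightarrow> Hsum e = v"
proof -
  obtain c where "c \<noteq> 0" and c: "\<And>e. e \<in> jumps \<Longrightarrow> 2 * H0 e = c"
    using rotating_imp_H0_constant_on_jumps[OF assms] by blast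
  have "Hsum e = 4 * c / pi" if "e \<in> jumps" for e
  proof -
    have "-pi/8 \<le> e" "e \<le> pi/8"
      using that jumps_subset by auto
    then have "e \<in> {-3*pi/8<..<3*pi/8}"
      using pi_gt_zero unfolding greaterThanLessThan_iff by linarith
    then show ?thesis
      using H0_eq_Hsum[of e] c[OF that] by (simp add: field_simps)
  qed
  moreover have "4 * c / pi \<noteq> 0"
    using \<open>c \<noteq> 0\<close> by simp
  ultimately show ?thesis
    using that by blast
qed

lemma rotating_imp_jumps_eq_pair:
  assumes "rotating (per_ind I)"
    and e12: "e1 \<in> jumps" "e2 \<in> jumps" "e1 < e2" "jump e1 = 1" "jump e2 = -1"
      "\<And>e. e \<in> jumps - {e1} \<Longrightarrow> e2 \<le> e"
  shows "jumps = {e1, e2}"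
proof (rule ccontr)
  assume "jumps \<noteq> {e1, e2}"
  with e12(1-3,6) obtain e3 where e3: "e3 \<in> jumps" "e2 < e3" "{e\<in>jumps. e < e3} = {e1, e2}"
    by (rule third_jump)
  define eN where "eN = Max jumps"
  have "eN \<in> jumps"
    unfolding eN_def using finite_jumps e3(1) by (intro Max_in) auto
  moreover have "e \<le> eN" if "e \<in> jumps" for e
    unfolding eN_def using finite_jumps that by (rule Max_ge)
  ultimately have eN: "eN \<in> jumps" "\<And>e. e \<in> jumps \<Longrightarrow> e \<le> eN"
    by blast+
  obtain v where "v \<noteq> 0" and v: "\<And>e. e \<in> jumps \<Longrightarrow> Hsum e = v"
    using rotating_imp_Hsum_constant_on_jumps[OF assms(1)] by blast
  have range: "\<theta> \<in> {-pi/8..pi/8}" if "\<theta> \<in> jumps" for \<theta>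
    using that jumps_subset by auto
  have below_e1: "{e\<in>jumps. e < e1} = {}" and below_e2: "{e\<in>jumps. e < e2} = {e1}"
    using e12 by (fastforce simp: less_le)+
  have "cos_coeff * cos (2 * e1) + sin_coeff * sin (2 * e1) = v"
    using Hsum_eq_sinusoid[OF range[OF e12(1)], unfolded below_e1] v[OF e12(1)] by simp
  moreover have "cos_coeff * cos (2 * e2) + sin_coeff * sin (2 * e2) + (1 - cos (2 * (e2 - e1))) = v"
    using Hsum_eq_sinusoid[OF range[OF e12(2)], unfolded below_e2] v[OF e12(2)] e12(4) by simp
  moreover have "cos_coeff * cos (2 * e3) + sin_coeff * sin (2 * e3)
      + (1 - cos (2 * (e3 - e1))) - (1 - cos (2 * (e3 - e2))) = v"
    using Hsum_eq_sinusoid[OF range[OF e3(1)], unfolded e3(3)] v[OF e3(1)] e12(3-5) by simp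
  moreover have "- (cos_coeff * cos (2 * eN) + sin_coeff * sin (2 * eN)) = v"
    using Hsum_at_last_jump[OF eN] v[OF eN(1)] by simp
  moreover have "eN \<le> pi/8" "-pi/8 \<le> e1"
    using range[OF eN(1)] range[OF e12(1)] by auto
  ultimately show False
    using e12(3) e3(2) eN(2)[OF e3(1)] \<open>v \<noteq> 0\<close>
    by (intro jump_levels_incompatible[of e1 e2 e3 eN v cos_coeff sin_coeff]) auto
qed

lemma rotating_imp_AE_interval:
  assumes "rotating (per_ind I)"
  shows "\<exists>b a. -pi/8 \<le> b \<and> b \<le> a \<and> a \<le> pi/8 \<and> (AE \<theta> in lborel. per_ind I \<theta> = per_ind {b..a} \<theta>)"
proof (cases "jumps = {}")
  case True
  have "\<theta> \<in> I \<longleftrightarrow> \<theta> \<in> {0..0}" if "\<theta> \<notin> insert 0 endpoints" for \<theta>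
    using indicator_eq_sum_jumps[of \<theta>] that True by (simp add: indicator_def split: if_splits)
  then have "AE \<theta> in lborel. per_ind I \<theta> = per_ind {0..0} \<theta>"
    using finite_endpoints by (intro per_ind_AE_eq[of "insert 0 endpoints"]) auto
  then show ?thesis
    by (intro exI[of _ 0]) auto
next
  case False
  then obtain e1 e2 where e12: "e1 \<in> jumps" "e2 \<in> jumps" "e1 < e2" "jump e1 = 1" "jump e2 = -1"
    "\<And>e. e \<in> jumps - {e1} \<Longrightarrow> e2 \<le> e"
    by (rule first_two_jumps) blast
  then have jumps: "jumps = {e1, e2}"
    by (intro rotating_imp_jumps_eq_pair[OF assms]) auto
  have "\<theta> \<in> I \<longleftrightarrow> \<theta> \<in> {e1..e2}" if "\<theta> \<notin> endpoints" for \<theta>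
  proof -
    have ne: "\<theta> \<noteq> e1" "\<theta> \<noteq> e2"
      using that e12(1,2) unfolding jumps_def by auto
    then have "{e\<in>jumps. e < \<theta>} = (if \<theta> < e1 then {} else if \<theta> < e2 then {e1} else {e1, e2})"
      using e12(3) unfolding jumps by auto
    then have "indicator I \<theta> = (if \<theta> < e1 then 0 else if \<theta> < e2 then 1 else (0::real))"
      using indicator_eq_sum_jumps[OF that] e12(3-5) by simp
    then show ?thesis
      using ne by (auto simp: indicator_def split: if_splits)
  qed
  then have "AE \<theta> in lborel. per_ind I \<theta> = per_ind {e1..e2} \<theta>"
    by (rule per_ind_AE_eq[OF finite_endpoints])
  moreover have "-pi/8 \<le> e1" "e2 \<le> pi/8"
    using e12(1,2) jumps_subset by auto
  ultimately show ?thesis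
    using e12(3) by (intro exI[of _ e1] exI[of _ e2]) auto
qed

end

theorem mainTheorem1:
  fixes I :: "real set" and F :: "real set set"
  assumes "finite F"
    and "\<forall>J\<in>F. is_interval J"
    and "pairwise disjnt F"
    and "I = \<Union>F"
    and "I \<subseteq> {-pi/8..pi/8}"
    and "rotating (per_ind I)"
  shows "\<exists>b a. -pi/8 \<le> b \<and> b \<le> a \<and> a \<le> pi/8 \<and>
           (AE \<theta> in lborel. per_ind I \<theta> = per_ind {b..a} \<theta>)"
proof -
  interpret interval_union I "F - {{}}"
    using assms(1-5) by unfold_locales (auto simp: pairwise_def)
  show ?thesis
    using rotating_imp_AE_interval[OF assms(6)] .
qed

end
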